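(* Let $(\alpha_n)_{n\ge1}$ and $(\beta_n)_{n\ge1}$ be increasing sequences of real numbers with $\alpha_n\le\beta_n\le\alpha_{n+1}$ for all $n$, $\alpha_1>1$, and $\sum_n\alpha_n^{-\lambda}<\infty$ for every $\lambda>1$. Then: (1) The Euler products $E_1(s)=\prod_n(1-\alpha_n^{-s})^{-1}$ and $E_2(s)=\prod_n(1-\beta_n^{-s})^{-1}$ are well defined and analytic on $\{\operatorname{Re}(s)>1\}$. (2) There exists a function $f$, analytic and nowhere vanishing on $\{\operatorname{Re}(s)>0\}$, such that $E_1(s)=E_2(s)f(s)$ for $\operatorname{Re}(s)>1$. *)

theory Defs
  imports "HOL-Analysis.Analysis"
begin

text \<open>Euler product  prod_n (1 - a_n^(-s))^(-1), sequence indexed from 0.\<close>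
definition euler_factor :: "(nat \<Rightarrow> real) \<Rightarrow> complex \<Rightarrow> nat \<Rightarrow> complex" where
  "euler_factor a s n = inverse (1 - (complex_of_real (a n)) powr (- s))"

definition euler_product :: "(nat \<Rightarrow> real) \<Rightarrow> complex \<Rightarrow> complex" where
  "euler_product a s = (\<Prod>n. euler_factor a s n)"

end

theory Submission
  imports Defs "HOL-Complex_Analysis.Complex_Analysis"
begin

(*
  Both Euler products converge locally uniformly on Re s > 1, because there
  |(1 - a^(-s))^(-1) - 1| is at most a constant times a^(-Re s). Their quotient is
  f(s) = prod_n (1 - beta_n^(-s)) / (1 - alpha_n^(-s)). By the mean value theorem,
  |alpha_n^(-s) - beta_n^(-s)| <= (|s| / sigma) (alpha_n^(-sigma) - beta_n^(-sigma)) for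
  Re s >= sigma > 0, and by interlacing these bounds are dominated by the telescoping
  terms alpha_n^(-sigma) - alpha_(n+1)^(-sigma), whose sum is finite for every sigma > 0.
  So the product for f converges locally uniformly on Re s > 0 to a holomorphic function
  without zeros.
*)

lemma convergent_prod_dominated:
  fixes f :: "nat \<Rightarrow> 'a :: {real_normed_field, banach}"
  assumes "summable M" and "\<And>n. norm (f n - 1) \<le> M n"
  shows "convergent_prod f"
  using assms
  by (intro abs_convergent_prod_imp_convergent_prod summable_imp_abs_convergent_prod)
     (auto elim: summable_comparison_test')

lemma holomorphic_on_prodinf_locally_dominated:
  fixes F :: "nat \<Rightarrow> complex \<Rightarrow> complex"
  assumes S: "open S" and hol: "\<And>n. F n holomorphic_on S"
    and dom: "\<And>x. x \<in> S \<Longrightarrow> \<exists>d>0. cball x d \<subseteq> S \<and>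
                 (\<exists>M. summable M \<and> (\<forall>n. \<forall>z\<in>cball x d. norm (F n z - 1) \<le> M n))"
  shows "(\<lambda>z. \<Prod>n. F n z) holomorphic_on S"
proof (rule holomorphic_uniform_sequence[OF S, where f = "\<lambda>N z. \<Prod>n<N. F n z"])
  show "(\<lambda>z. \<Prod>n<N. F n z) holomorphic_on S" for N
    using hol by (intro holomorphic_intros) auto
next
  fix x assume "x \<in> S"
  then obtain d M where d: "d > 0" "cball x d \<subseteq> S" and M: "summable M"
    and le_M: "\<And>n z. z \<in> cball x d \<Longrightarrow> norm (F n z - 1) \<le> M n"
    using dom by meson
  have "uniformly_convergent_on (cball x d) (\<lambda>N z. \<Prod>n<N. F n z)"
  proof (rule uniformly_convergent_on_prod')
    show "continuous_on (cball x d) (F n)" for n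
      using hol d(2) holomorphic_on_imp_continuous_on holomorphic_on_subset by blast
    show "uniformly_convergent_on (cball x d) (\<lambda>N z. \<Sum>n<N. norm (F n z - 1))"
      by (rule Weierstrass_m_test'[OF _ M]) (use le_M in auto)
  qed auto
  then have "uniform_limit (cball x d) (\<lambda>N z. \<Prod>n<N. F n z)
               (\<lambda>z. lim (\<lambda>N. \<Prod>n<N. F n z)) sequentially"
    using uniformly_convergent_uniform_limit_iff by blast
  moreover have "lim (\<lambda>N. \<Prod>n<N. F n z) = (\<Prod>n. F n z)" if "z \<in> cball x d" for z
  proof -
    have "convergent_prod (\<lambda>n. F n z)"
      using M le_M[OF that] by (rule convergent_prod_dominated)
    then show ?thesis
      by (intro limI has_prod_imp_tendsto' convergent_prod_has_prod)
  qed
  ultimately have "uniform_limit (cball x d) (\<lambda>N z. \<Prod>n<N. F n z) (\<lambda>z. \<Prod>n. F n z) sequentially"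
    using uniform_limit_cong'[of "cball x d"] by (metis (no_types, lifting))
  with d show "\<exists>d>0. cball x d \<subseteq> S \<and>
                 uniform_limit (cball x d) (\<lambda>N z. \<Prod>n<N. F n z) (\<lambda>z. \<Prod>n. F n z) sequentially"
    by blast
qed

lemma holomorphic_on_prodinf_halfplane:
  fixes F :: "nat \<Rightarrow> complex \<Rightarrow> complex"
  assumes hol: "\<And>n. F n holomorphic_on {s. c < Re s}"
    and dom: "\<And>\<sigma> R. c < \<sigma> \<Longrightarrow> \<exists>M. summable M \<and>
                 (\<forall>n s. \<sigma> \<le> Re s \<longrightarrow> norm s \<le> R \<longrightarrow> norm (F n s - 1) \<le> M n)"
  shows "(\<lambda>s. \<Prod>n. F n s) holomorphic_on {s. c < Re s}"
proof (rule holomorphic_on_prodinf_locally_dominated[OF open_halfspace_Re_gt hol])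
  fix x assume "x \<in> {s. c < Re s}"
  define d where "d = (Re x - c) / 2"
  have d: "d > 0" and \<sigma>: "c < Re x - d"
    using \<open>x \<in> {s. c < Re s}\<close> by (auto simp: d_def field_simps)
  have Re_ge: "Re x - d \<le> Re z" and norm_le: "norm z \<le> norm x + d" if "z \<in> cball x d" for z
    using that abs_Re_le_cmod[of "x - z"] norm_triangle_ineq2[of z x]
    by (auto simp: dist_norm norm_minus_commute)
  obtain M where "summable M"
    and "\<forall>n s. Re x - d \<le> Re s \<longrightarrow> norm s \<le> norm x + d \<longrightarrow> norm (F n s - 1) \<le> M n"
    using dom \<sigma> by blast
  moreover have "cball x d \<subseteq> {s. c < Re s}"
    using Re_ge \<sigma> by fastforce
  ultimately show "\<exists>d>0. cball x d \<subseteq> {s. c < Re s} \<and>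
                     (\<exists>M. summable M \<and> (\<forall>n. \<forall>z\<in>cball x d. norm (F n z - 1) \<le> M n))"
    using d Re_ge norm_le by blast
qed

lemma norm_one_minus_cpowr_neg_ge:
  fixes a a0 \<sigma> :: real and s :: complex
  assumes "1 < a0" "a0 \<le> a" "0 < \<sigma>" "\<sigma> \<le> Re s"
  shows "1 - a0 powr (- \<sigma>) \<le> norm (1 - of_real a powr (- s))"
    and "0 < 1 - a0 powr (- \<sigma>)"
proof -
  have "norm (of_real a powr (- s) :: complex) = a powr (- Re s)"
    using assms by (simp add: norm_powr_real_powr)
  also have "\<dots> \<le> a powr (- \<sigma>)"
    using assms by (intro powr_mono) auto
  also have "\<dots> \<le> a0 powr (- \<sigma>)"
    using assms by (intro powr_mono2') auto
  finally show "1 - a0 powr (- \<sigma>) \<le> norm (1 - of_real a powr (- s))"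
    using norm_triangle_ineq2[of 1 "of_real a powr (- s) :: complex"] by simp
  show "0 < 1 - a0 powr (- \<sigma>)"
    using powr_less_mono[of "- \<sigma>" 0 a0] assms by simp
qed

lemma one_minus_cpowr_neg_nonzero:
  fixes a :: real and s :: complex
  assumes "1 < a" "0 < Re s"
  shows "1 - of_real a powr (- s) \<noteq> 0"
  using norm_one_minus_cpowr_neg_ge[OF assms(1) order_refl assms(2) order_refl] by auto

lemma norm_cpowr_neg_diff_le:
  fixes a b \<sigma> :: real and s :: complex
  assumes "1 \<le> a" "a \<le> b" "0 < \<sigma>" "\<sigma> \<le> Re s"
  shows "norm (of_real b powr (- s) - of_real a powr (- s))
           \<le> norm s / \<sigma> * (a powr (- \<sigma>) - b powr (- \<sigma>))"
proof (cases "a = b")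
  case False
  then have ln_less: "ln a < ln b"
    using assms by simp
  define f where "f t = exp (- s * of_real t)" for t :: real
  define \<phi> where "\<phi> t = - (norm s / \<sigma>) * exp (- \<sigma> * t)" for t :: real
  have "norm (f (ln b) - f (ln a)) \<le> \<phi> (ln b) - \<phi> (ln a)"
  proof (rule differentiable_bound_general[OF ln_less])
    show "continuous_on {ln a..ln b} f" "continuous_on {ln a..ln b} \<phi>"
      unfolding f_def \<phi>_def by (intro continuous_intros)+
    fix t assume t: "ln a < t" "t < ln b"
    have "((\<lambda>z. exp (- s * z)) has_field_derivative exp (- s * of_real t) * (- s)) (at (of_real t))"
      by (auto intro!: derivative_eq_intros)
    then show "(f has_vector_derivative exp (- s * of_real t) * (- s)) (at t)"
      unfolding f_def by (rule has_vector_derivative_real_field)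
    show "(\<phi> has_vector_derivative norm s * exp (- \<sigma> * t)) (at t)"
      unfolding \<phi>_def has_real_derivative_iff_has_vector_derivative[symmetric]
      using \<open>0 < \<sigma>\<close> by (auto intro!: derivative_eq_intros)
    have "0 \<le> t"
      using t assms by (smt (verit) ln_ge_zero)
    then have "exp (- Re s * t) \<le> exp (- \<sigma> * t)"
      using assms by (auto intro: mult_right_mono)
    then show "norm (exp (- s * of_real t) * (- s)) \<le> norm s * exp (- \<sigma> * t)"
      by (simp add: norm_mult mult.commute mult_left_mono)
  qed
  moreover have "f (ln b) = of_real b powr (- s)" "f (ln a) = of_real a powr (- s)"
    using assms by (simp_all add: f_def powr_def Ln_of_real)
  moreover have "\<phi> (ln b) - \<phi> (ln a) = norm s / \<sigma> * (a powr (- \<sigma>) - b powr (- \<sigma>))"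
    using assms by (simp add: \<phi>_def powr_def exp_minus algebra_simps)
  ultimately show ?thesis
    by simp
qed simp

lemma euler_factor_nonzero:
  assumes "1 < a n" "0 < Re s"
  shows "euler_factor a s n \<noteq> 0"
  using one_minus_cpowr_neg_nonzero[OF assms] by (simp add: euler_factor_def)

lemma holomorphic_on_euler_factor:
  assumes "1 < a n" "0 \<le> c"
  shows "(\<lambda>s. euler_factor a s n) holomorphic_on {s. c < Re s}"
  unfolding euler_factor_def using assms one_minus_cpowr_neg_nonzero
  by (intro holomorphic_intros) auto

lemma norm_euler_factor_minus_one_le:
  assumes "1 < a0" "a0 \<le> a n" "0 < \<sigma>" "\<sigma> \<le> Re s"
  shows "norm (euler_factor a s n - 1) \<le> a n powr (- \<sigma>) / (1 - a0 powr (- \<sigma>))"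
proof -
  let ?w = "of_real (a n) powr (- s) :: complex"
  note lower = norm_one_minus_cpowr_neg_ge[OF assms]
  have "1 - ?w \<noteq> 0"
    using assms by (intro one_minus_cpowr_neg_nonzero) auto
  then have "euler_factor a s n - 1 = ?w / (1 - ?w)"
    by (simp add: euler_factor_def field_simps)
  then have "norm (euler_factor a s n - 1) = norm ?w / norm (1 - ?w)"
    by (simp add: norm_divide)
  also have "\<dots> \<le> a n powr (- \<sigma>) / (1 - a0 powr (- \<sigma>))"
  proof (rule frac_le)
    have "norm ?w = a n powr (- Re s)"
      using assms by (simp add: norm_powr_real_powr)
    also have "\<dots> \<le> a n powr (- \<sigma>)"
      using assms by (intro powr_mono) auto
    finally show "norm ?w \<le> a n powr (- \<sigma>)" .
  qed (use lower in auto)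
  finally show ?thesis .
qed

lemma norm_euler_factor_ratio_minus_one_le:
  assumes "1 < a0" "a0 \<le> \<alpha> n" "\<alpha> n \<le> \<beta> n" "0 < \<sigma>" "\<sigma> \<le> Re s"
  shows "norm (euler_factor \<alpha> s n / euler_factor \<beta> s n - 1)
           \<le> norm s / \<sigma> * (\<alpha> n powr (- \<sigma>) - \<beta> n powr (- \<sigma>)) / (1 - a0 powr (- \<sigma>))"
proof -
  let ?v = "of_real (\<beta> n) powr (- s) :: complex"
  let ?w = "of_real (\<alpha> n) powr (- s) :: complex"
  note lower = norm_one_minus_cpowr_neg_ge[OF assms(1,2,4,5)]
  have "1 - ?v \<noteq> 0" "1 - ?w \<noteq> 0"
    using assms by (intro one_minus_cpowr_neg_nonzero; simp)+
  then have "euler_factor \<alpha> s n / euler_factor \<beta> s n - 1 = (?w - ?v) / (1 - ?w)"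
    by (simp add: euler_factor_def field_simps)
  then have "norm (euler_factor \<alpha> s n / euler_factor \<beta> s n - 1) = norm (?v - ?w) / norm (1 - ?w)"
    by (simp add: norm_divide norm_minus_commute)
  also have "\<dots> \<le> norm s / \<sigma> * (\<alpha> n powr (- \<sigma>) - \<beta> n powr (- \<sigma>)) / (1 - a0 powr (- \<sigma>))"
  proof (rule frac_le)
    have "\<beta> n powr (- \<sigma>) \<le> \<alpha> n powr (- \<sigma>)"
      using assms by (intro powr_mono2') auto
    then show "0 \<le> norm s / \<sigma> * (\<alpha> n powr (- \<sigma>) - \<beta> n powr (- \<sigma>))"
      using assms by simp
    show "norm (?v - ?w) \<le> norm s / \<sigma> * (\<alpha> n powr (- \<sigma>) - \<beta> n powr (- \<sigma>))"
      using assms by (intro norm_cpowr_neg_diff_le) auto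
  qed (use lower in auto)
  finally show ?thesis .
qed

context
  fixes a :: "nat \<Rightarrow> real" and a0 :: real
  assumes a0: "1 < a0" "\<And>n. a0 \<le> a n"
    and summable_powr: "\<And>l. 1 < l \<Longrightarrow> summable (\<lambda>n. a n powr (- l))"
begin

lemma euler_factor_dominated:
  assumes "1 < \<sigma>"
  shows "\<exists>M. summable M \<and> (\<forall>n s. \<sigma> \<le> Re s \<longrightarrow> norm (euler_factor a s n - 1) \<le> M n)"
  using assms a0 summable_divide[OF summable_powr[OF assms]]
  by (intro exI[of _ "\<lambda>n. a n powr (- \<sigma>) / (1 - a0 powr (- \<sigma>))"])
     (auto intro: norm_euler_factor_minus_one_le)

lemma convergent_prod_euler_factor:
  assumes "1 < Re s"
  shows "convergent_prod (euler_factor a s)"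
  using euler_factor_dominated[OF assms] by (auto intro: convergent_prod_dominated)

lemma analytic_on_euler_product: "euler_product a analytic_on {s. 1 < Re s}"
proof -
  have "(\<lambda>s. \<Prod>n. euler_factor a s n) holomorphic_on {s. 1 < Re s}"
  proof (rule holomorphic_on_prodinf_halfplane)
    show "(\<lambda>s. euler_factor a s n) holomorphic_on {s. 1 < Re s}" for n
      using a0 by (intro holomorphic_on_euler_factor) (auto intro: less_le_trans)
    show "\<exists>M. summable M \<and> (\<forall>n s. \<sigma> \<le> Re s \<longrightarrow> norm s \<le> R \<longrightarrow> norm (euler_factor a s n - 1) \<le> M n)"
      if "1 < \<sigma>" for \<sigma> R :: real
      using euler_factor_dominated[OF that] by blast
  qed
  then show ?thesis
    by (simp add: analytic_on_open open_halfspace_Re_gt euler_product_def[abs_def])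
qed

end

definition euler_product_ratio :: "(nat \<Rightarrow> real) \<Rightarrow> (nat \<Rightarrow> real) \<Rightarrow> complex \<Rightarrow> complex" where
  "euler_product_ratio \<alpha> \<beta> s = (\<Prod>n. euler_factor \<alpha> s n / euler_factor \<beta> s n)"

context
  fixes \<alpha> \<beta> :: "nat \<Rightarrow> real" and a0 :: real
  assumes a0: "1 < a0" "\<And>n. a0 \<le> \<alpha> n" and le: "\<And>n. \<alpha> n \<le> \<beta> n"
    and summable_diff: "\<And>l. 0 < l \<Longrightarrow> summable (\<lambda>n. \<alpha> n powr (- l) - \<beta> n powr (- l))"
begin

lemma interlaced_gt_one: "1 < \<alpha> n" "1 < \<beta> n"
  using a0 le[of n] by (auto intro: less_le_trans)

lemma euler_factor_ratio_dominated:
  assumes "0 < \<sigma>"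
  shows "\<exists>M. summable M \<and> (\<forall>n s. \<sigma> \<le> Re s \<longrightarrow> norm s \<le> R \<longrightarrow>
           norm (euler_factor \<alpha> s n / euler_factor \<beta> s n - 1) \<le> M n)"
proof (intro exI conjI allI impI)
  let ?M = "\<lambda>n. R / \<sigma> * (\<alpha> n powr (- \<sigma>) - \<beta> n powr (- \<sigma>)) / (1 - a0 powr (- \<sigma>))"
  show "summable ?M"
    using summable_diff[OF assms] by (intro summable_divide summable_mult)
  fix n s assume s: "\<sigma> \<le> Re s" "norm s \<le> R"
  have "\<beta> n powr (- \<sigma>) \<le> \<alpha> n powr (- \<sigma>)"
    using interlaced_gt_one[of n] le assms by (auto intro!: powr_mono2')
  have "0 < 1 - a0 powr (- \<sigma>)"
    using norm_one_minus_cpowr_neg_ge(2)[of a0 a0 \<sigma> s] a0 assms s by auto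
  have "norm (euler_factor \<alpha> s n / euler_factor \<beta> s n - 1)
          \<le> norm s / \<sigma> * (\<alpha> n powr (- \<sigma>) - \<beta> n powr (- \<sigma>)) / (1 - a0 powr (- \<sigma>))"
    by (rule norm_euler_factor_ratio_minus_one_le) (use a0 le assms s in auto)
  also have "\<dots> \<le> ?M n"
    using s assms \<open>\<beta> n powr (- \<sigma>) \<le> \<alpha> n powr (- \<sigma>)\<close> \<open>0 < 1 - a0 powr (- \<sigma>)\<close>
    by (intro divide_right_mono mult_right_mono) auto
  finally show "norm (euler_factor \<alpha> s n / euler_factor \<beta> s n - 1) \<le> ?M n" .
qed

lemma euler_factor_ratio_nonzero:
  assumes "0 < Re s"
  shows "euler_factor \<alpha> s n / euler_factor \<beta> s n \<noteq> 0"
  using interlaced_gt_one assms by (simp add: euler_factor_nonzero)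

lemma convergent_prod_euler_factor_ratio:
  assumes "0 < Re s"
  shows "convergent_prod (\<lambda>n. euler_factor \<alpha> s n / euler_factor \<beta> s n)"
  using euler_factor_ratio_dominated[OF assms, of "norm s"] by (auto intro: convergent_prod_dominated)

lemma euler_product_ratio_nonzero:
  assumes "0 < Re s"
  shows "euler_product_ratio \<alpha> \<beta> s \<noteq> 0"
  unfolding euler_product_ratio_def
  using convergent_prod_euler_factor_ratio[OF assms] euler_factor_ratio_nonzero[OF assms]
  by (rule prodinf_nonzero)

lemma analytic_on_euler_product_ratio: "euler_product_ratio \<alpha> \<beta> analytic_on {s. 0 < Re s}"
proof -
  have "(\<lambda>s. \<Prod>n. euler_factor \<alpha> s n / euler_factor \<beta> s n) holomorphic_on {s. 0 < Re s}"
  proof (rule holomorphic_on_prodinf_halfplane)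
    show "(\<lambda>s. euler_factor \<alpha> s n / euler_factor \<beta> s n) holomorphic_on {s. 0 < Re s}" for n
      using interlaced_gt_one
      by (intro holomorphic_intros holomorphic_on_euler_factor euler_factor_nonzero) auto
  qed (fact euler_factor_ratio_dominated)
  then show ?thesis
    by (simp add: analytic_on_open open_halfspace_Re_gt euler_product_ratio_def[abs_def])
qed

end

lemma euler_product_eq_mult_ratio:
  assumes "convergent_prod (euler_factor \<beta> s)"
    and "convergent_prod (\<lambda>n. euler_factor \<alpha> s n / euler_factor \<beta> s n)"
    and "\<And>n. euler_factor \<beta> s n \<noteq> 0"
  shows "euler_product \<alpha> s = euler_product \<beta> s * euler_product_ratio \<alpha> \<beta> s"
  using prodinf_mult[OF assms(1,2)] assms(3)
  by (simp add: euler_product_def euler_product_ratio_def)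

lemma summable_powr_neg_diff_interlaced:
  fixes \<alpha> \<beta> :: "nat \<Rightarrow> real"
  assumes "mono \<alpha>" "0 < \<alpha> 0" "\<And>n. \<alpha> n \<le> \<beta> n" "\<And>n. \<beta> n \<le> \<alpha> (Suc n)" "0 < l"
  shows "summable (\<lambda>n. \<alpha> n powr (- l) - \<beta> n powr (- l))"
proof -
  have pos: "0 < \<alpha> n" for n
    using assms(1,2) by (metis less_le_trans monoD zero_le)
  have "decseq (\<lambda>n. \<alpha> n powr (- l))"
    using assms pos by (intro decseq_SucI powr_mono2') (auto intro: order_trans)
  then obtain L where "(\<lambda>n. \<alpha> n powr (- l)) \<longlonglongrightarrow> L"
    using decseq_convergent[of _ 0] by (metis powr_ge_zero)
  then have telescope: "summable (\<lambda>n. \<alpha> n powr (- l) - \<alpha> (Suc n) powr (- l))"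
    by (rule telescope_summable')
  show ?thesis
  proof (rule summable_comparison_test'[OF telescope])
    fix n
    have "\<beta> n powr (- l) \<le> \<alpha> n powr (- l)" "\<alpha> (Suc n) powr (- l) \<le> \<beta> n powr (- l)"
      using assms pos[of n] by (auto intro!: powr_mono2' intro: less_le_trans)
    then show "norm (\<alpha> n powr (- l) - \<beta> n powr (- l)) \<le> \<alpha> n powr (- l) - \<alpha> (Suc n) powr (- l)"
      by simp
  qed
qed

theorem mainTheorem3:
  fixes \<alpha> \<beta> :: "nat \<Rightarrow> real"
  assumes "mono \<alpha>" and "mono \<beta>"
    and "\<And>n. \<alpha> n \<le> \<beta> n" and "\<And>n. \<beta> n \<le> \<alpha> (Suc n)"
    and "\<alpha> 0 > 1"
    and "\<And>l::real. l > 1 \<Longrightarrow> summable (\<lambda>n. \<alpha> n powr (- l))"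
  shows "(\<forall>s. Re s > 1 \<longrightarrow> convergent_prod (euler_factor \<alpha> s) \<and> convergent_prod (euler_factor \<beta> s))
       \<and> euler_product \<alpha> analytic_on {s. Re s > 1}
       \<and> euler_product \<beta> analytic_on {s. Re s > 1}
       \<and> (\<exists>f. f analytic_on {s. Re s > 0} \<and> (\<forall>s. Re s > 0 \<longrightarrow> f s \<noteq> 0)
              \<and> (\<forall>s. Re s > 1 \<longrightarrow> euler_product \<alpha> s = euler_product \<beta> s * f s))"
proof -
  note \<alpha>\<beta> = assms(3)
  have \<alpha>_ge: "\<alpha> 0 \<le> \<alpha> n" and \<beta>_ge: "\<alpha> 0 \<le> \<beta> n" for n
    using assms(1) \<alpha>\<beta>[of n] by (auto intro: monoD order_trans)
  have summable_\<beta>: "summable (\<lambda>n. \<beta> n powr (- l))" if "1 < l" for l :: real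
  proof (rule summable_comparison_test'[OF assms(6)[OF that]])
    show "norm (\<beta> n powr (- l)) \<le> \<alpha> n powr (- l)" for n
      using assms(5) \<alpha>_ge[of n] \<alpha>\<beta>[of n] that by (simp add: powr_mono2')
  qed
  have summable_diff: "summable (\<lambda>n. \<alpha> n powr (- l) - \<beta> n powr (- l))" if "0 < l" for l :: real
    using assms that by (intro summable_powr_neg_diff_interlaced) auto
  note conv_\<alpha> = convergent_prod_euler_factor[OF assms(5) \<alpha>_ge assms(6)]
   and conv_\<beta> = convergent_prod_euler_factor[OF assms(5) \<beta>_ge summable_\<beta>]
   and conv_ratio = convergent_prod_euler_factor_ratio[OF assms(5) \<alpha>_ge \<alpha>\<beta> summable_diff]
  have "euler_product \<alpha> s = euler_product \<beta> s * euler_product_ratio \<alpha> \<beta> s" if "1 < Re s" for s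
    using that assms(5) \<beta>_ge
    by (intro euler_product_eq_mult_ratio conv_\<beta> conv_ratio euler_factor_nonzero)
       (auto intro: less_le_trans)
  then show ?thesis
    using conv_\<alpha> conv_\<beta>
      analytic_on_euler_product[OF assms(5) \<alpha>_ge assms(6)]
      analytic_on_euler_product[OF assms(5) \<beta>_ge summable_\<beta>]
      analytic_on_euler_product_ratio[OF assms(5) \<alpha>_ge \<alpha>\<beta> summable_diff]
      euler_product_ratio_nonzero[OF assms(5) \<alpha>_ge \<alpha>\<beta> summable_diff]
    by blast
qed

end
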